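(* Let $\ell$ be a generic length vector of length $n=m+3\ge4$ whose genetic code consists of a single gene $\{n,g_1,\ldots,g_k\}$ with $n>g_1>\cdots>g_k\ge1$; set $g_{k+1}=0$ and $a_i=g_i-g_{i+1}>0$. Then $R^{m-t}V_{g_{i_1}}\cdots V_{g_{i_t}}=0$ in $H^m(\overline{M}(\ell))$ for all $t<k$ and all $1\le i_1<\cdots<i_t\le k$ if and only if $a_i\equiv1\pmod{2^{\lg(2i)}}$ for all $i=1,\ldots,k$.
   Context: A generic length vector $\ell=(\ell_1,\ldots,\ell_n)$: positive reals, $\ell_1\le\cdots\le\ell_n<\ell_1+\cdots+\ell_{n-1}$, with no $S\subset[\![n]\!]=\{1,\ldots,n\}$ having $\sum_{i\in S}\ell_i=\sum_{i\notin S}\ell_i$. $\overline{M}(\ell)=\{(z_i)\in(S^1)^n:\sum\ell_iz_i=0\}/O(2)$, a closed connected $m$-manifold. $S$ is short if $\sum_{i\in S}\ell_i<\sum_{i\notin S}\ell_i$; the genetic code is the set of maximal short sets containing $n$ (genes) for the order $\{s_1,\ldots,s_p\}\le T$ iff $T$ contains distinct $t_1,\ldots,t_p$ with $s_i\le t_i$; a subgee is $S\subset[\![n-1]\!]$ with $S\cup\{n\}$ short. Cohomology has $\mathbb{Z}_2$ coefficients. By Hausmann–Knudsen, $H^*(\overline{M}(\ell))$ is generated by $R,V_1,\ldots,V_{n-1}\in H^1$ subject only to: (i) monomials of the same degree divisible by exactly the same set of $V_i$'s are equal; with $V_I=\prod_{i\in I}V_i$, the $R^{d-|I|}V_I$ span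 $H^d$; (ii) $V_I=0$ unless $I$ is a subgee; (iii) for each subgee $S$ with $|S|\ge n-2-d$, $\sum_{T}R^{d-|T|}V_T=0$ in $H^d$, summed over $T\subset[\![n-1]\!]$, $|T|\le d$, $T\cap S=\emptyset$. $\lg(x)=\lfloor\log_2x\rfloor$. *)

theory Defs
  imports Complex_Main
begin

text \<open>A length vector of length n is a function \<open>l :: nat \<Rightarrow> real\<close>, only the
values at 1..n matter.\<close>

definition generic_length_vector :: "(nat \<Rightarrow> real) \<Rightarrow> nat \<Rightarrow> bool" where
  "generic_length_vector l n \<longleftrightarrow>
     (\<forall>i\<in>{1..n}. 0 < l i) \<and>
     (\<forall>i j. 1 \<le> i \<longrightarrow> i \<le> j \<longrightarrow> j \<le> n \<longrightarrow> l i \<le> l j) \<and>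
     l n < (\<Sum>i\<in>{1..<n}. l i) \<and>
     (\<forall>S. S \<subseteq> {1..n} \<longrightarrow> (\<Sum>i\<in>S. l i) \<noteq> (\<Sum>i\<in>{1..n} - S. l i))"

definition short :: "(nat \<Rightarrow> real) \<Rightarrow> nat \<Rightarrow> nat set \<Rightarrow> bool" where
  "short l n S \<longleftrightarrow> S \<subseteq> {1..n} \<and> (\<Sum>i\<in>S. l i) < (\<Sum>i\<in>{1..n} - S. l i)"

definition set_le :: "nat set \<Rightarrow> nat set \<Rightarrow> bool" where
  "set_le S T \<longleftrightarrow> (\<exists>f. inj_on f S \<and> f ` S \<subseteq> T \<and> (\<forall>s\<in>S. s \<le> f s))"

definition genetic_code :: "(nat \<Rightarrow> real) \<Rightarrow> nat \<Rightarrow> nat set set" where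
  "genetic_code l n = {S. short l n S \<and> n \<in> S \<and>
      (\<forall>T. short l n T \<and> n \<in> T \<and> set_le S T \<longrightarrow> T = S)}"

definition subgee :: "(nat \<Rightarrow> real) \<Rightarrow> nat \<Rightarrow> nat set \<Rightarrow> bool" where
  "subgee l n S \<longleftrightarrow> S \<subseteq> {1..n-1} \<and> short l n (insert n S)"

text \<open>Modulo relation (i), the free graded commutative Z_2-algebra on R, V_1..V_{n-1}
becomes the monoid algebra whose degree-d basis consists of the monomials
\<open>R^(d-|I|) V_I\<close> with \<open>I \<subseteq> {1..n-1}\<close>, \<open>|I| \<le> d\<close>; the monomial of degree d is encoded by
the set I.  A homogeneous element of degree d is a finite Z_2-combination of such
monomials, encoded as the (finite) set of monomials with coefficient 1.\<close>

text \<open>Multiplying a homogeneous element v by the monomial J (of some degree):\<close>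
definition mono_times :: "nat set \<Rightarrow> nat set set \<Rightarrow> nat set set" where
  "mono_times J v = {U. odd (card {T\<in>v. J \<union> T = U})}"

text \<open>Homogeneous generators (degree, element) of the ideal of relations (ii), (iii).\<close>
definition HK_generators :: "(nat \<Rightarrow> real) \<Rightarrow> nat \<Rightarrow> (nat \<times> nat set set) set" where
  "HK_generators l n =
     {(card I, {I}) | I. I \<subseteq> {1..n-1} \<and> \<not> subgee l n I} \<union>
     {(d, {T. T \<subseteq> {1..n-1} \<and> T \<inter> S = {} \<and> card T \<le> d}) | S d.
         subgee l n S \<and> int (card S) \<ge> int n - 2 - int d}"

text \<open>Degree-m part of the ideal generated by these relations.\<close>
definition HK_ideal_gens :: "(nat \<Rightarrow> real) \<Rightarrow> nat \<Rightarrow> nat \<Rightarrow> nat set set set" where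
  "HK_ideal_gens l n m =
     {mono_times J v | J v d. (d, v) \<in> HK_generators l n \<and> d \<le> m \<and>
                              J \<subseteq> {1..n-1} \<and> card J \<le> m - d}"

text \<open>Z_2-span (addition = symmetric difference).\<close>
inductive_set z2_span :: "nat set set set \<Rightarrow> nat set set set" for G where
  zero: "{} \<in> z2_span G"
| add: "x \<in> z2_span G \<Longrightarrow> g \<in> G \<Longrightarrow> (x - g) \<union> (g - x) \<in> z2_span G"

text \<open>\<open>R^(d-|I|) V_I = 0\<close> in \<open>H^d(\<overline>M(l))\<close>.\<close>
definition HK_monomial_zero :: "(nat \<Rightarrow> real) \<Rightarrow> nat \<Rightarrow> nat \<Rightarrow> nat set \<Rightarrow> bool" where
  "HK_monomial_zero l n d I \<longleftrightarrow> {I} \<in> z2_span (HK_ideal_gens l n d)"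

definition lg :: "nat \<Rightarrow> nat" where
  "lg x = nat \<lfloor>log 2 (real x)\<rfloor>"

end

theory Submission
  imports Defs
begin

text \<open>By the Hausmann--Knudsen presentation, the degree-\<open>m\<close> monomial \<open>R^(m-|U|) V_U\<close>
  vanishes iff an even number of subgees contain \<open>U\<close>: modulo relations (iii), the sum of the
  degree-\<open>m\<close> monomials divisible by \<open>V_V\<close> is the same for every subgee \<open>V\<close>, and conversely
  the number of pairs (monomial, subgee containing it) is even on every relation.

  For a single gene \<open>{n, g_1, \<dots>, g_k}\<close> the subgees are the sets below \<open>g_1\<close> having at most
  \<open>i\<close> elements above \<open>g_(i+1)\<close> for each \<open>i\<close>. This only depends on how many elements a set has
  in each gap \<open>(g_(i+1), g_i)\<close>, which has \<open>a_i - 1\<close> points; so modulo 2 it suffices to count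
  the subgees containing \<open>g ` J\<close> whose part in every gap is an initial segment of a size \<open>y\<close> with
  \<open>a_i - 1 choose y\<close> odd. If \<open>2^lg(2i)\<close> divides \<open>a_i - 1\<close>, these binomials are even for
  \<open>1 \<le> y \<le> i\<close> and only the \<open>2^(k-|J|)\<close> subsets of the gene survive. Otherwise take the least
  offending \<open>y\<close> and the last gap \<open>i\<close> where it occurs: for \<open>J\<close> omitting the genes
  \<open>g_(i-y+1), \<dots>, g_i\<close> exactly one further set survives.\<close>

section \<open>Counting modulo 2\<close>

definition z2_sum :: "'b set \<Rightarrow> ('b \<Rightarrow> 'a set) \<Rightarrow> 'a set" where
  "z2_sum F h = {x. odd (card {a\<in>F. x \<in> h a})}"

lemma even_card_sym_diff:
  assumes "finite A" "finite B"
  shows "even (card (sym_diff A B)) \<longleftrightarrow> even (card A + card B)"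
proof -
  have eq: "sym_diff A B = (A \<union> B) - (A \<inter> B)" by auto
  have "card (sym_diff A B) = card (A \<union> B) - card (A \<inter> B)"
    unfolding eq by (rule card_Diff_subset) (use assms in auto)
  moreover have "card A + card B = card (A \<union> B) + card (A \<inter> B)"
    using card_Un_Int[OF assms] .
  moreover have "card (A \<inter> B) \<le> card (A \<union> B)"
    by (rule card_mono) (use assms in auto)
  ultimately have "card A + card B = card (sym_diff A B) + 2 * card (A \<inter> B)"
    by linarith
  then show ?thesis by simp
qed

lemma card_filter_insert:
  "card {x\<in>insert a A. P x} = (if P a then Suc (card {x\<in>A. P x}) else card {x\<in>A. P x})"
  if "finite A" "a \<notin> A"
proof -
  have "{x\<in>insert a A. P x} = (if P a then insert a {x\<in>A. P x} else {x\<in>A. P x})"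
    by auto
  then show ?thesis using that by auto
qed

lemma even_card_odd_fibres:
  assumes "finite A"
  shows "even (card {y. odd (card {x\<in>A. f x = y})}) \<longleftrightarrow> even (card A)"
  using assms
proof (induction A rule: finite_induct)
  case empty
  then show ?case by simp
next
  case (insert a A)
  let ?O = "\<lambda>B. {y. odd (card {x\<in>B. f x = y})}"
  have "?O A \<subseteq> f ` A"
  proof
    fix y assume "y \<in> ?O A"
    then have "{x\<in>A. f x = y} \<noteq> {}" by (intro notI) simp
    then show "y \<in> f ` A" by auto
  qed
  then have fin: "finite (?O A)"
    using insert.hyps(1) finite_surj by blast
  have "y \<in> ?O (insert a A) \<longleftrightarrow> y \<in> sym_diff (?O A) {f a}" for y
    using card_filter_insert[OF insert.hyps, of "\<lambda>x. f x = y"] by auto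
  then have "?O (insert a A) = sym_diff (?O A) {f a}"
    by blast
  then have "even (card (?O (insert a A))) \<longleftrightarrow> even (card (?O A) + 1)"
    using even_card_sym_diff[OF fin, of "{f a}"] by simp
  then show ?case using insert by simp
qed

lemma card_sets_between:
  assumes "finite X" "U \<subseteq> X"
  shows "card {V. U \<subseteq> V \<and> V \<subseteq> X} = 2 ^ card (X - U)"
proof -
  have "{V. U \<subseteq> V \<and> V \<subseteq> X} = (\<lambda>W. W \<union> U) ` Pow (X - U)"
  proof
    show "{V. U \<subseteq> V \<and> V \<subseteq> X} \<subseteq> (\<lambda>W. W \<union> U) ` Pow (X - U)"
    proof
      fix V assume "V \<in> {V. U \<subseteq> V \<and> V \<subseteq> X}"
      then have "V = (V - U) \<union> U" "V - U \<in> Pow (X - U)" by auto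
      then show "V \<in> (\<lambda>W. W \<union> U) ` Pow (X - U)" by blast
    qed
  qed (use assms in auto)
  moreover have "inj_on (\<lambda>W. W \<union> U) (Pow (X - U))"
    by (rule inj_onI) auto
  ultimately show ?thesis
    using assms by (simp add: card_image card_Pow)
qed

lemma z2_sum_insert:
  assumes "finite F" "a \<notin> F"
  shows "z2_sum (insert a F) h = sym_diff (h a) (z2_sum F h)"
proof -
  have "x \<in> z2_sum (insert a F) h \<longleftrightarrow> x \<in> sym_diff (h a) (z2_sum F h)" for x
    using card_filter_insert[OF assms, of "\<lambda>b. x \<in> h b"] unfolding z2_sum_def by auto
  then show ?thesis by blast
qed

lemma z2_sum_sym_diff:
  assumes "finite F"
  shows "z2_sum F (\<lambda>a. sym_diff (h1 a) (h2 a)) = sym_diff (z2_sum F h1) (z2_sum F h2)"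
proof -
  have "odd (card {a\<in>F. x \<in> sym_diff (h1 a) (h2 a)}) \<longleftrightarrow>
        odd (card {a\<in>F. x \<in> h1 a}) \<noteq> odd (card {a\<in>F. x \<in> h2 a})" for x
  proof -
    have "{a\<in>F. x \<in> sym_diff (h1 a) (h2 a)} = sym_diff {a\<in>F. x \<in> h1 a} {a\<in>F. x \<in> h2 a}"
      by auto
    then show ?thesis
      using even_card_sym_diff[of "{a\<in>F. x \<in> h1 a}" "{a\<in>F. x \<in> h2 a}"] assms by auto
  qed
  then show ?thesis unfolding z2_sum_def by auto
qed

lemma z2_sum_if:
  "z2_sum F (\<lambda>a. if P a then c else {}) = (if odd (card {a\<in>F. P a}) then c else {})"
proof -
  have "{a\<in>F. x \<in> (if P a then c else {})} = (if x \<in> c then {a\<in>F. P a} else {})" for x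
    by auto
  then show ?thesis unfolding z2_sum_def by auto
qed

lemma z2_span_sym_diff:
  assumes "x \<in> z2_span G" "y \<in> z2_span G"
  shows "sym_diff x y \<in> z2_span G"
  using assms(2)
proof (induction y rule: z2_span.induct)
  case zero
  then show ?case using assms(1) by simp
next
  case (add y g)
  have "sym_diff x (sym_diff y g) = sym_diff (sym_diff x y) g"
    by auto
  then show ?case using z2_span.add[OF add.IH add.hyps(2)] by simp
qed

lemma z2_span_generator: "g \<in> G \<Longrightarrow> g \<in> z2_span G"
  using z2_span.add[OF z2_span.zero, of g G] by simp

lemma z2_span_z2_sum:
  assumes "finite F" "\<And>a. a \<in> F \<Longrightarrow> h a \<in> z2_span G"
  shows "z2_sum F h \<in> z2_span G"
  using assms
proof (induction F rule: finite_induct)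
  case empty
  then show ?case by (simp add: z2_sum_def z2_span.zero)
next
  case (insert a F)
  then show ?case by (simp add: z2_sum_insert z2_span_sym_diff)
qed

lemma z2_span_of_singletons:
  assumes "finite x" "\<And>U. U \<in> x \<Longrightarrow> {U} \<in> z2_span G"
  shows "x \<in> z2_span G"
  using assms
proof (induction x rule: finite_induct)
  case empty
  then show ?case by (simp add: z2_span.zero)
next
  case (insert U x)
  have "insert U x = sym_diff {U} x"
    using insert.hyps(2) by auto
  then show ?case
    using z2_span_sym_diff[of "{U}" G x] insert by simp
qed

lemma even_card_mono_times_below:
  assumes "finite V"
  shows "even (card {U\<in>mono_times J v. U \<subseteq> V} + card {T\<in>v. J \<union> T \<subseteq> V})"
proof -
  let ?A = "{T\<in>v. J \<union> T \<subseteq> V}"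
  have fin: "finite ?A"
    by (rule finite_subset[of _ "Pow V"]) (use assms in auto)
  have "{T\<in>?A. J \<union> T = U} = (if U \<subseteq> V then {T\<in>v. J \<union> T = U} else {})" for U
    by auto
  then have "{U. odd (card {T\<in>?A. J \<union> T = U})} = {U\<in>mono_times J v. U \<subseteq> V}"
    unfolding mono_times_def by auto
  then show ?thesis
    using even_card_odd_fibres[OF fin, of "\<lambda>T. J \<union> T"] by simp
qed

section \<open>Vanishing of a single monomial\<close>

locale hk_presentation =
  fixes l :: "nat \<Rightarrow> real" and n m :: nat
  assumes generic: "generic_length_vector l n" and n_eq: "n = m + 3"
begin

lemma l_pos: "i \<in> {1..n} \<Longrightarrow> 0 < l i"
  using generic unfolding generic_length_vector_def by auto

lemma l_mono: "1 \<le> i \<Longrightarrow> i \<le> j \<Longrightarrow> j \<le> n \<Longrightarrow> l i \<le> l j"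
  using generic unfolding generic_length_vector_def by auto

lemma sum_l_mono: "finite B \<Longrightarrow> A \<subseteq> B \<Longrightarrow> B \<subseteq> {1..n} \<Longrightarrow> sum l A \<le> sum l B"
  by (rule sum_mono2) (auto intro!: less_imp_le[OF l_pos])

lemma short_iff: "short l n X \<longleftrightarrow> X \<subseteq> {1..n} \<and> 2 * sum l X < sum l {1..n}"
proof -
  have "X \<subseteq> {1..n} \<Longrightarrow> sum l ({1..n} - X) = sum l {1..n} - sum l X"
    by (rule sum_diff) auto
  then show ?thesis unfolding short_def by auto
qed

lemma subgee_subset: "subgee l n V \<Longrightarrow> V \<subseteq> {1..n-1}"
  unfolding subgee_def by auto

lemma finite_subgee: "subgee l n V \<Longrightarrow> finite V"
  using subgee_subset finite_subset by blast

lemma finite_subgees: "finite {V. subgee l n V}"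
  by (rule finite_subset[of _ "Pow {1..n-1}"]) (use subgee_subset in auto)

lemma subgee_subset_closed:
  assumes "subgee l n V" "U \<subseteq> V"
  shows "subgee l n U"
proof -
  have V: "V \<subseteq> {1..n-1}" "finite V"
    using assms(1) subgee_subset finite_subgee by blast+
  then have "sum l (insert n U) \<le> sum l (insert n V)"
    using assms(2) n_eq by (intro sum_l_mono) auto
  then show ?thesis
    using assms V(1) n_eq unfolding subgee_def short_iff by auto
qed

lemma card_subgee_le:
  assumes "subgee l n V"
  shows "card V \<le> m"
proof (rule ccontr)
  assume "\<not> card V \<le> m"
  have V: "V \<subseteq> {1..n-1}" "finite V" "n \<notin> V"
    using assms subgee_subset finite_subgee n_eq by fastforce+
  let ?C = "{1..n-1} - V"
  have short: "sum l (insert n V) < sum l ?C"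
  proof -
    have "{1..n} - insert n V = ?C" using n_eq by auto
    then show ?thesis using assms unfolding subgee_def short_def by simp
  qed
  have "card ?C \<le> 1"
    using card_Diff_subset[OF V(2,1)] \<open>\<not> card V \<le> m\<close> n_eq by simp
  then have "sum l ?C \<le> l n"
  proof (cases "?C = {}")
    case False
    then obtain j where j: "?C = {j}"
      using \<open>card ?C \<le> 1\<close> card_le_Suc0_iff_eq[of ?C] by auto
    then have "j \<in> ?C" by blast
    then have "l j \<le> l n" using l_mono[of j n] by auto
    with j show ?thesis by simp
  next
    case True
    then have "sum l ?C = 0" by (simp only: sum.empty)
    then show ?thesis using l_pos[of n] n_eq by simp
  qed
  moreover have "0 \<le> sum l V"
    using sum_l_mono[of V "{}"] V by force
  ultimately show False using short V by simp
qed

lemma card_subgee_Un_le: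
  assumes "subgee l n V" "subgee l n S"
  shows "card (V \<union> S) \<le> m + 1"
proof (rule ccontr)
  assume "\<not> card (V \<union> S) \<le> m + 1"
  have V: "V \<subseteq> {1..n-1}" "finite V" and S: "S \<subseteq> {1..n-1}" "finite S"
    using assms subgee_subset finite_subgee by blast+
  have "card {1..n-1} \<le> card (V \<union> S)"
    using \<open>\<not> card (V \<union> S) \<le> m + 1\<close> n_eq by simp
  then have "V \<union> S = {1..n-1}"
    using card_seteq[of "{1..n-1}" "V \<union> S"] V S by blast
  then have "{1..n} - insert n V \<subseteq> S" "{1..n} - insert n S \<subseteq> V"
    using n_eq by auto
  then have "sum l ({1..n} - insert n V) \<le> sum l S" "sum l ({1..n} - insert n S) \<le> sum l V"
    using V S n_eq by (auto intro!: sum_l_mono)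
  moreover have "n \<notin> V" "n \<notin> S" "0 < l n"
    using V S l_pos n_eq by auto
  ultimately show False
    using assms V S unfolding subgee_def short_def by simp
qed

abbreviation relations :: "nat set set set" where
  "relations \<equiv> z2_span (HK_ideal_gens l n m)"

text \<open>The sum of all degree-\<open>m\<close> monomials divisible by \<open>V_V\<close>.\<close>

definition multiples :: "nat set \<Rightarrow> nat set set" where
  "multiples V = {U. V \<subseteq> U \<and> U \<subseteq> {1..n-1} \<and> card U \<le> m}"

lemma finite_multiples: "finite (multiples V)"
  by (rule finite_subset[of _ "Pow {1..n-1}"]) (auto simp: multiples_def)

text \<open>Relation (iii) for the subgee \<open>insert s V\<close>, multiplied by \<open>V_V\<close>.\<close>

lemma multiples_insert_relation:
  assumes sg: "subgee l n (insert s V)" and s: "s \<notin> V"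
  shows "sym_diff (multiples V) (multiples (insert s V)) \<in> relations"
proof -
  let ?S = "insert s V"
  have fV: "finite V" using finite_subgee[OF sg] by simp
  have cS: "card ?S \<le> m" "card ?S = Suc (card V)"
    using card_subgee_le[OF sg] fV s by auto
  have V: "V \<subseteq> {1..n-1}" using subgee_subset[OF sg] by auto
  define d where "d = m - card V"
  define v where "v = {T. T \<subseteq> {1..n-1} \<and> T \<inter> ?S = {} \<and> card T \<le> d}"
  have "int (card ?S) \<ge> int n - 2 - int d" using cS d_def n_eq by simp
  then have gen: "(d, v) \<in> HK_generators l n"
    unfolding HK_generators_def v_def using sg by blast
  have fibre: "{T\<in>v. V \<union> T = U} =
      (if V \<subseteq> U \<and> U \<subseteq> {1..n-1} \<and> s \<notin> U \<and> card U \<le> m then {U - V} else {})" for U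
  proof (cases "V \<subseteq> U \<and> U \<subseteq> {1..n-1} \<and> s \<notin> U \<and> card U \<le> m")
    case True
    then have "card (U - V) = card U - card V"
      using card_Diff_subset[OF fV] by simp
    then have "U - V \<in> v" using True d_def unfolding v_def by auto
    then show ?thesis using True unfolding v_def by auto
  next
    case False
    have False if T: "T \<in> v" "V \<union> T = U" for T
    proof -
      have "card U \<le> card V + card T" using T(2) card_Un_le by blast
      then show False using False T V cS s d_def unfolding v_def by auto
    qed
    then show ?thesis using False by auto
  qed
  have "mono_times V v = sym_diff (multiples V) (multiples ?S)"
    unfolding mono_times_def multiples_def using fibre by auto
  moreover have "mono_times V v \<in> HK_ideal_gens l n m"
    unfolding HK_ideal_gens_def using gen V d_def cS by force
  ultimately show ?thesis using z2_span_generator by metis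
qed

lemma multiples_subgee_relation:
  assumes "subgee l n V"
  shows "sym_diff (multiples V) (multiples {}) \<in> relations"
  using finite_subgee[OF assms] assms
proof (induction V rule: finite_induct)
  case empty
  then show ?case by (simp add: z2_span.zero)
next
  case (insert s V)
  have "sym_diff (multiples V) (multiples {}) \<in> relations"
    using insert.IH subgee_subset_closed[OF insert.prems] by blast
  moreover have "sym_diff (multiples V) (multiples (insert s V)) \<in> relations"
    using multiples_insert_relation[OF insert.prems insert.hyps(2)] .
  moreover have "sym_diff (sym_diff (multiples V) (multiples (insert s V)))
      (sym_diff (multiples V) (multiples {})) = sym_diff (multiples (insert s V)) (multiples {})"
    by auto
  ultimately show ?case using z2_span_sym_diff by metis
qed

lemma singleton_non_subgee_relation:
  assumes "U \<subseteq> {1..n-1}" "card U \<le> m" "\<not> subgee l n U"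
  shows "{U} \<in> relations"
proof -
  have "(card U, {U}) \<in> HK_generators l n"
    unfolding HK_generators_def using assms by blast
  then have "mono_times {} {U} \<in> HK_ideal_gens l n m"
    unfolding HK_ideal_gens_def using assms by force
  moreover have "mono_times {} {U} = {U}"
  proof -
    have "{T\<in>{U}. {} \<union> T = U'} = (if U = U' then {U} else {})" for U'
      by auto
    then show ?thesis unfolding mono_times_def by auto
  qed
  ultimately show ?thesis using z2_span_generator by metis
qed

lemma multiples_non_subgee_relation:
  assumes "\<not> subgee l n V"
  shows "multiples V \<in> relations"
proof (rule z2_span_of_singletons[OF finite_multiples])
  fix U assume U: "U \<in> multiples V"
  then have "\<not> subgee l n U" using assms subgee_subset_closed unfolding multiples_def by blast
  then show "{U} \<in> relations" using singleton_non_subgee_relation U unfolding multiples_def by auto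
qed

lemma z2_sum_multiples:
  assumes U: "U \<subseteq> {1..n-1}" "card U \<le> m"
  shows "z2_sum {V. U \<subseteq> V \<and> V \<subseteq> {1..n-1} \<and> card V \<le> m} multiples = {U}"
proof -
  let ?A = "{V. U \<subseteq> V \<and> V \<subseteq> {1..n-1} \<and> card V \<le> m}"
  have "x \<in> z2_sum ?A multiples \<longleftrightarrow> x = U" for x
  proof (cases "x \<subseteq> {1..n-1} \<and> card x \<le> m \<and> U \<subseteq> x")
    case True
    then have fx: "finite x" using finite_subset by blast
    have "{V\<in>?A. x \<in> multiples V} = {V. U \<subseteq> V \<and> V \<subseteq> x}"
      unfolding multiples_def using True by (auto intro: order.trans[OF card_mono[OF fx]])
    then have "card {V\<in>?A. x \<in> multiples V} = 2 ^ card (x - U)"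
      using card_sets_between[OF fx] True by simp
    then show ?thesis unfolding z2_sum_def using True fx by auto
  next
    case False
    then have "{V\<in>?A. x \<in> multiples V} = {}"
      unfolding multiples_def by auto
    then have "x \<notin> z2_sum ?A multiples"
      unfolding z2_sum_def by (simp only: mem_Collect_eq card.empty) simp
    moreover have "x \<noteq> U" using False U by auto
    ultimately show ?thesis by simp
  qed
  then show ?thesis by blast
qed

text \<open>Moebius inversion: \<open>{U}\<close> is the sum of \<open>multiples V\<close> over all \<open>V \<supseteq> U\<close>, and
  modulo relations each of these is \<open>multiples {}\<close> or \<open>0\<close>.\<close>

lemma singleton_relation_if_even:
  assumes U: "U \<subseteq> {1..n-1}" "card U \<le> m"
    and even: "even (card {V. subgee l n V \<and> U \<subseteq> V})"
  shows "{U} \<in> relations"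
proof -
  define A where "A = {V. U \<subseteq> V \<and> V \<subseteq> {1..n-1} \<and> card V \<le> m}"
  have fA: "finite A"
    unfolding A_def by (rule finite_subset[of _ "Pow {1..n-1}"]) auto
  define h where "h V = sym_diff (multiples V) (if subgee l n V then multiples {} else {})" for V
  have "h V \<in> relations" for V
    using multiples_subgee_relation multiples_non_subgee_relation unfolding h_def
    by (cases "subgee l n V") simp_all
  then have "z2_sum A h \<in> relations"
    using z2_span_z2_sum[OF fA] by blast
  moreover have "{V\<in>A. subgee l n V} = {V. subgee l n V \<and> U \<subseteq> V}"
    unfolding A_def using subgee_subset card_subgee_le by blast
  then have "z2_sum A (\<lambda>V. if subgee l n V then multiples {} else {}) = {}"
    using z2_sum_if[of A "subgee l n" "multiples {}"] even by simp
  ultimately show ?thesis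
    using z2_sum_sym_diff[OF fA, of multiples] z2_sum_multiples[OF U] unfolding h_def A_def
    by simp
qed

text \<open>A linear form on degree-\<open>m\<close> elements that vanishes on all relations and takes the
  value \<open>#{V subgee. U \<subseteq> V}\<close> (mod 2) on the monomial \<open>U\<close>.\<close>

definition subgee_count :: "nat set set \<Rightarrow> nat" where
  "subgee_count x = (\<Sum>V | subgee l n V. card {U\<in>x. U \<subseteq> V})"

lemma even_card_relation_below_subgee:
  assumes V: "subgee l n V" and S: "subgee l n S" and d: "m + 1 \<le> card S + d"
  shows "even (card {T\<in>{T. T \<subseteq> {1..n-1} \<and> T \<inter> S = {} \<and> card T \<le> d}. J \<union> T \<subseteq> V}
              + (if J \<subseteq> V \<and> V \<subseteq> S then 1 else 0))"
proof (cases "J \<subseteq> V")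
  case True
  have fV: "finite V" and fS: "finite S" using finite_subgee V S by blast+
  have "V \<union> S = (V - S) \<union> S" by auto
  then have "card (V \<union> S) = card (V - S) + card S"
    using card_Un_disjoint[of "V - S" S] fV fS by auto
  then have "card (V - S) \<le> d"
    using card_subgee_Un_le[OF V S] d by linarith
  have "{T\<in>{T. T \<subseteq> {1..n-1} \<and> T \<inter> S = {} \<and> card T \<le> d}. J \<union> T \<subseteq> V} = Pow (V - S)"
  proof (intro equalityI subsetI)
    fix T assume "T \<in> Pow (V - S)"
    moreover from this have "card T \<le> card (V - S)"
      using fV by (auto intro: card_mono)
    ultimately show "T \<in> {T\<in>{T. T \<subseteq> {1..n-1} \<and> T \<inter> S = {} \<and> card T \<le> d}. J \<union> T \<subseteq> V}"
      using True subgee_subset[OF V] \<open>card (V - S) \<le> d\<close> by auto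
  qed auto
  then have "card {T\<in>{T. T \<subseteq> {1..n-1} \<and> T \<inter> S = {} \<and> card T \<le> d}. J \<union> T \<subseteq> V}
      = 2 ^ card (V - S)"
    using fV by (simp add: card_Pow)
  moreover have "card (V - S) = 0 \<longleftrightarrow> V \<subseteq> S"
    using fV by auto
  ultimately show ?thesis using True by (cases "card (V - S)") auto
qed auto

lemma even_card_subgees_between:
  assumes S: "subgee l n S" and J: "finite J" "card J < card S"
  shows "even (card {V. subgee l n V \<and> J \<subseteq> V \<and> V \<subseteq> S})"
proof -
  have eq: "{V. subgee l n V \<and> J \<subseteq> V \<and> V \<subseteq> S} = {V. J \<subseteq> V \<and> V \<subseteq> S}"
    using subgee_subset_closed[OF S] by auto
  show ?thesis
  proof (cases "J \<subseteq> S")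
    case True
    have "S - J \<noteq> {}"
      using J card_mono[OF J(1), of S] by auto
    then have "card (S - J) \<noteq> 0"
      using finite_subgee[OF S] by simp
    then show ?thesis
      unfolding eq card_sets_between[OF finite_subgee[OF S] True] by simp
  next
    case False
    then have "{V. J \<subseteq> V \<and> V \<subseteq> S} = {}" by auto
    then show ?thesis unfolding eq by (simp only: card.empty even_zero)
  qed
qed

lemma even_subgee_count_generator:
  assumes "x \<in> HK_ideal_gens l n m"
  shows "even (subgee_count x)"
proof -
  obtain J v d where x: "x = mono_times J v" and gen: "(d, v) \<in> HK_generators l n"
    and d: "d \<le> m" and J: "J \<subseteq> {1..n-1}" "card J \<le> m - d"
    using assms unfolding HK_ideal_gens_def by blast
  from gen consider
      (non_subgee) I where "v = {I}" "\<not> subgee l n I"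
    | (complement) S where "v = {T. T \<subseteq> {1..n-1} \<and> T \<inter> S = {} \<and> card T \<le> d}"
        "subgee l n S" "int (card S) \<ge> int n - 2 - int d"
    unfolding HK_generators_def by blast
  then have "even (\<Sum>V | subgee l n V. card {T\<in>v. J \<union> T \<subseteq> V})"
  proof cases
    case non_subgee
    then have "card {T\<in>v. J \<union> T \<subseteq> V} = 0" if "subgee l n V" for V
      using that subgee_subset_closed[of V I] by auto
    then show ?thesis by (subst sum.neutral) auto
  next
    case complement
    have d': "m + 1 \<le> card S + d" using complement(3) n_eq by linarith
    have "even (\<Sum>V | subgee l n V. card {T\<in>v. J \<union> T \<subseteq> V} + (if J \<subseteq> V \<and> V \<subseteq> S then 1 else 0))"
      using even_card_relation_below_subgee[OF _ complement(2) d'] complement(1)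
      by (intro dvd_sum) simp
    moreover have "(\<Sum>V | subgee l n V. if J \<subseteq> V \<and> V \<subseteq> S then 1 else 0::nat)
        = card {V. subgee l n V \<and> J \<subseteq> V \<and> V \<subseteq> S}"
      using sum.inter_filter[OF finite_subgees, of "\<lambda>_. 1::nat" "\<lambda>V. J \<subseteq> V \<and> V \<subseteq> S"]
      by simp
    moreover have "finite J" using J(1) finite_subset by blast
    then have "even (card {V. subgee l n V \<and> J \<subseteq> V \<and> V \<subseteq> S})"
      using even_card_subgees_between[OF complement(2)] J(2) d d' by simp
    ultimately show ?thesis unfolding sum.distrib by simp
  qed
  moreover have "even (\<Sum>V | subgee l n V. card {U\<in>x. U \<subseteq> V} + card {T\<in>v. J \<union> T \<subseteq> V})"
    using even_card_mono_times_below finite_subgee unfolding x by (intro dvd_sum) blast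
  ultimately show ?thesis unfolding subgee_count_def sum.distrib by simp
qed

lemma even_subgee_count_relation:
  assumes "x \<in> relations"
  shows "even (subgee_count x)"
  using assms
proof (induction x rule: z2_span.induct)
  case zero
  then show ?case by (simp add: subgee_count_def)
next
  case (add x g)
  have "even (card {U\<in>sym_diff x g. U \<subseteq> V} + card {U\<in>x. U \<subseteq> V} + card {U\<in>g. U \<subseteq> V})"
    if "subgee l n V" for V
  proof -
    have fin: "finite {U\<in>x. U \<subseteq> V}" "finite {U\<in>g. U \<subseteq> V}"
      using finite_subgee[OF that] by (auto intro: finite_subset[of _ "Pow V"])
    have "{U\<in>sym_diff x g. U \<subseteq> V} = sym_diff {U\<in>x. U \<subseteq> V} {U\<in>g. U \<subseteq> V}"
      by auto
    then show ?thesis using even_card_sym_diff[OF fin] by presburger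
  qed
  then have "even (\<Sum>V | subgee l n V.
      card {U\<in>sym_diff x g. U \<subseteq> V} + card {U\<in>x. U \<subseteq> V} + card {U\<in>g. U \<subseteq> V})"
    by (intro dvd_sum) blast
  then show ?case
    using add.IH even_subgee_count_generator[OF add.hyps(2)]
    unfolding subgee_count_def sum.distrib by simp
qed

lemma subgee_count_singleton: "subgee_count {U} = card {V. subgee l n V \<and> U \<subseteq> V}"
proof -
  have "{U'\<in>{U}. U' \<subseteq> V} = (if U \<subseteq> V then {U} else {})" for V
    by auto
  then have "subgee_count {U} = (\<Sum>V | subgee l n V. if U \<subseteq> V then 1 else 0)"
    unfolding subgee_count_def by (intro sum.cong) auto
  also have "\<dots> = card {V. subgee l n V \<and> U \<subseteq> V}"
    using sum.inter_filter[OF finite_subgees, of "\<lambda>_. 1::nat" "\<lambda>V. U \<subseteq> V"] by simp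
  finally show ?thesis .
qed

lemma singleton_relation_iff:
  assumes "U \<subseteq> {1..n-1}" "card U \<le> m"
  shows "{U} \<in> relations \<longleftrightarrow> even (card {V. subgee l n V \<and> U \<subseteq> V})"
  using singleton_relation_if_even[OF assms] even_subgee_count_relation[of "{U}"]
  unfolding subgee_count_singleton by blast

end

section \<open>Subgees of a single gene\<close>

lemma set_le_refl: "set_le A A"
  unfolding set_le_def by (rule exI[of _ id]) auto

lemma set_le_trans:
  assumes "set_le A B" "set_le B C"
  shows "set_le A C"
proof -
  obtain f where f: "inj_on f A" "f ` A \<subseteq> B" "\<forall>s\<in>A. s \<le> f s"
    using assms(1) unfolding set_le_def by blast
  obtain h where h: "inj_on h B" "h ` B \<subseteq> C" "\<forall>s\<in>B. s \<le> h s"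
    using assms(2) unfolding set_le_def by blast
  have "inj_on (h \<circ> f) A"
    using f h by (meson comp_inj_on inj_on_subset)
  moreover have "(h \<circ> f) ` A \<subseteq> C"
    using f h by auto
  moreover have "\<forall>s\<in>A. s \<le> (h \<circ> f) s"
    using f h by (metis comp_apply image_subset_iff le_trans)
  ultimately show ?thesis unfolding set_le_def by blast
qed

definition weight :: "nat set \<Rightarrow> nat" where
  "weight A = (\<Sum>a\<in>A. Suc a)"

lemma set_le_weight:
  assumes fin: "finite B" and le: "set_le A B"
  shows "weight A \<le> weight B \<and> (weight A = weight B \<longrightarrow> A = B)"
proof -
  obtain f where f: "inj_on f A" "f ` A \<subseteq> B" "\<forall>s\<in>A. s \<le> f s"
    using le unfolding set_le_def by blast
  have fA: "finite A"
    using finite_imageD[OF finite_subset[OF f(2) fin] f(1)] .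
  have le1: "weight A \<le> (\<Sum>a\<in>A. Suc (f a))"
    unfolding weight_def by (rule sum_mono) (use f in auto)
  have eq2: "(\<Sum>a\<in>A. Suc (f a)) = (\<Sum>b\<in>f ` A. Suc b)"
    using sum.reindex[OF f(1), of Suc] by simp
  have eq3: "(\<Sum>b\<in>f ` A. Suc b) + (\<Sum>b\<in>B - f ` A. Suc b) = weight B"
    unfolding weight_def using sum.subset_diff[OF f(2) fin, of Suc] by simp
  have "A = B" if "weight A = weight B"
  proof -
    have "(\<Sum>b\<in>B - f ` A. Suc b) = 0" using le1 eq2 eq3 that by linarith
    then have "f ` A = B" using fin f(2) by (simp add: sum_eq_0_iff) blast
    moreover have "f a = a" if "a \<in> A" for a
    proof (rule ccontr)
      assume "f a \<noteq> a"
      then have "weight A < (\<Sum>a\<in>A. Suc (f a))"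
        unfolding weight_def using sum_strict_mono_ex1[OF fA, of Suc "\<lambda>a. Suc (f a)"] f(3) that
        by force
      then show False using eq2 eq3 \<open>weight A = weight B\<close> \<open>f ` A = B\<close> by simp
    qed
    then have "f ` A = A" by auto
    ultimately show ?thesis by simp
  qed
  then show ?thesis using le1 eq2 eq3 by linarith
qed

context hk_presentation
begin

lemma short_set_le:
  assumes le: "set_le A B" and A: "A \<subseteq> {1..n}" and short: "short l n B"
  shows "short l n A"
proof -
  obtain f where f: "inj_on f A" "f ` A \<subseteq> B" "\<forall>s\<in>A. s \<le> f s"
    using le unfolding set_le_def by blast
  have B: "B \<subseteq> {1..n}" "finite B"
    using short finite_subset unfolding short_def by auto
  have "sum l A \<le> (\<Sum>a\<in>A. l (f a))"
    using f A B(1) l_mono by (intro sum_mono) force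
  also have "\<dots> = sum l (f ` A)" using sum.reindex[OF f(1), of l] by simp
  also have "\<dots> \<le> sum l B" by (rule sum_l_mono[OF B(2) f(2) B(1)])
  finally show ?thesis using short A unfolding short_iff by auto
qed

lemma short_le_genetic_code:
  assumes "short l n X" "n \<in> X"
  shows "\<exists>T\<in>genetic_code l n. set_le X T"
proof -
  define C where "C = {T. short l n T \<and> n \<in> T \<and> set_le X T}"
  have fin: "finite C"
    unfolding C_def by (rule finite_subset[of _ "Pow {1..n}"]) (auto simp: short_def)
  have "X \<in> C" unfolding C_def using assms set_le_refl by auto
  then have "Max (weight ` C) \<in> weight ` C"
    using fin by (intro Max_in) auto
  then obtain T where T: "T \<in> C" "weight T = Max (weight ` C)"
    by auto
  have max: "weight T' \<le> weight T" if "T' \<in> C" for T'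
    using fin that T(2) by simp
  have "T \<in> genetic_code l n"
    unfolding genetic_code_def
  proof (intro CollectI conjI allI impI)
    show "short l n T" "n \<in> T" using T unfolding C_def by auto
    fix T' assume T': "short l n T' \<and> n \<in> T' \<and> set_le T T'"
    then have "T' \<in> C" using T(1) set_le_trans unfolding C_def by blast
    moreover have "finite T'" using T' unfolding short_def by (auto intro: finite_subset)
    ultimately show "T' = T" using max set_le_weight T' by force
  qed
  then show ?thesis using T(1) unfolding C_def by blast
qed

end

locale single_gene = hk_presentation +
  fixes g :: "nat \<Rightarrow> nat" and k :: nat
  assumes genetic_code_eq: "genetic_code l n = {insert n (g ` {1..k})}"
    and g_range: "\<forall>i\<in>{1..k}. 1 \<le> g i \<and> g i < n"
    and g_decreasing: "\<forall>i. 1 \<le> i \<and> i < k \<longrightarrow> g (i + 1) < g i"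
    and k_pos: "1 \<le> k"
begin

abbreviation genes :: "nat set" where
  "genes \<equiv> g ` {1..k}"

lemma genes_subset: "genes \<subseteq> {1..n-1}"
  using g_range by force

lemma g_strict_antimono: "1 \<le> i \<Longrightarrow> i < j \<Longrightarrow> j \<le> k \<Longrightarrow> g j < g i"
proof (induction j)
  case (Suc j)
  have "g (Suc j) < g j" if "1 \<le> j"
    using g_decreasing Suc.prems that by auto
  then show ?case using Suc by (cases "i = j") (auto intro: less_trans)
qed simp

lemma g_antimono: "1 \<le> i \<Longrightarrow> i \<le> j \<Longrightarrow> j \<le> k \<Longrightarrow> g j \<le> g i"
  using g_strict_antimono by (cases "i = j") (auto intro: less_imp_le)

lemma inj_on_g: "inj_on g {1..k}"
  by (rule inj_onI) (metis atLeastAtMost_iff g_strict_antimono linorder_neqE_nat less_irrefl)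

lemma card_genes: "card genes = k"
  using card_image[OF inj_on_g] by simp

lemma subgee_iff_set_le_genes: "subgee l n V \<longleftrightarrow> V \<subseteq> {1..n-1} \<and> set_le V genes"
proof
  assume V: "V \<subseteq> {1..n-1} \<and> set_le V genes"
  then obtain f where f: "inj_on f V" "f ` V \<subseteq> genes" "\<forall>s\<in>V. s \<le> f s"
    unfolding set_le_def by blast
  let ?F = "\<lambda>x. if x = n then n else f x"
  have "n \<notin> V" "n \<notin> genes" using V genes_subset n_eq by auto
  then have "inj_on ?F (insert n V)" "?F ` insert n V \<subseteq> insert n genes"
    "\<forall>s\<in>insert n V. s \<le> ?F s"
    using f by (auto simp: inj_on_def)
  then have "set_le (insert n V) (insert n genes)"
    unfolding set_le_def by blast
  moreover have "short l n (insert n genes)"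
    using genetic_code_eq unfolding genetic_code_def by blast
  ultimately have "short l n (insert n V)"
    using short_set_le V n_eq by force
  then show "subgee l n V" unfolding subgee_def using V by simp
next
  assume sg: "subgee l n V"
  then have V: "V \<subseteq> {1..n-1}" "n \<notin> V" using subgee_subset n_eq by force+
  have "set_le (insert n V) (insert n genes)"
    using short_le_genetic_code[of "insert n V"] sg genetic_code_eq unfolding subgee_def by auto
  then obtain f where f: "inj_on f (insert n V)" "f ` insert n V \<subseteq> insert n genes"
    "\<forall>s\<in>insert n V. s \<le> f s"
    unfolding set_le_def by blast
  have "f n = n" using f g_range by force
  then have "f v \<in> genes" if "v \<in> V" for v
    using f V(2) that unfolding inj_on_def by (metis image_subset_iff insertCI insertE)
  then have "set_le V genes"
    unfolding set_le_def using f inj_on_subset[OF f(1), of V] by (intro exI[of _ f]) auto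
  then show "V \<subseteq> {1..n-1} \<and> set_le V genes" using V by simp
qed

definition next_gene :: "nat \<Rightarrow> nat" where
  "next_gene i = (if i = k then 0 else g (i + 1))"

lemma next_gene_less:
  assumes "i \<in> {1..k}"
  shows "next_gene i < g i"
proof -
  have "1 \<le> g k" using g_range assms by auto
  then show ?thesis unfolding next_gene_def using g_decreasing assms by auto
qed

lemma next_gene_less_iff:
  assumes "i \<in> {1..k}" "j \<in> {1..k}"
  shows "next_gene i < g j \<longleftrightarrow> j \<le> i"
proof
  assume "j \<le> i"
  then show "next_gene i < g j"
    using g_antimono[of j i] next_gene_less[OF assms(1)] assms by auto
next
  assume less: "next_gene i < g j"
  show "j \<le> i"
  proof (rule ccontr)
    assume "\<not> j \<le> i"
    then have "i \<noteq> k" "g j \<le> g (i + 1)" using g_antimono assms by auto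
    then show False using less unfolding next_gene_def by simp
  qed
qed

lemma counts_if_set_le_genes:
  assumes "set_le V genes" "i \<in> {1..k}"
  shows "card {v\<in>V. next_gene i < v} \<le> i"
proof -
  obtain f where f: "inj_on f V" "f ` V \<subseteq> genes" "\<forall>s\<in>V. s \<le> f s"
    using assms(1) unfolding set_le_def by blast
  have "card {v\<in>V. next_gene i < v} = card (f ` {v\<in>V. next_gene i < v})"
    using card_image[OF inj_on_subset[OF f(1)]] by auto
  also have "\<dots> \<le> card (g ` {1..i})"
  proof (rule card_mono)
    show "f ` {v\<in>V. next_gene i < v} \<subseteq> g ` {1..i}"
    proof
      fix x assume "x \<in> f ` {v\<in>V. next_gene i < v}"
      then obtain v where v: "v \<in> V" "next_gene i < v" "x = f v" by auto
      then obtain j where j: "j \<in> {1..k}" "f v = g j" using f(2) by auto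
      have "next_gene i < g j" using v j f(3) by force
      then have "j \<le> i" using next_gene_less_iff assms(2) j by auto
      then show "x \<in> g ` {1..i}" using j v by auto
    qed
  qed auto
  also have "\<dots> \<le> i" using card_image_le[of "{1..i}" g] by simp
  finally show ?thesis .
qed

lemma le_g1_if_set_le_genes:
  assumes "set_le V genes" "v \<in> V"
  shows "v \<le> g 1"
proof -
  obtain f where f: "f ` V \<subseteq> genes" "\<forall>s\<in>V. s \<le> f s"
    using assms(1) unfolding set_le_def by blast
  then obtain j where "j \<in> {1..k}" "f v = g j" using assms(2) by auto
  then have "f v \<le> g 1" using g_antimono[of 1 j] by simp
  then show ?thesis using f(2) assms(2) by force
qed

text \<open>The \<open>r\<close>-th largest element of \<open>V\<close> is matched with \<open>g_r\<close>.\<close>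

lemma set_le_genes_if_counts:
  assumes V: "V \<subseteq> {1..n-1}" and top: "\<forall>v\<in>V. v \<le> g 1"
    and counts: "\<forall>i\<in>{1..k}. card {v\<in>V. next_gene i < v} \<le> i"
  shows "set_le V genes"
proof -
  have fin: "finite V" using V finite_subset by blast
  define rank where "rank v = card {w\<in>V. v \<le> w}" for v
  have "card {v\<in>V. next_gene k < v} \<le> k" using counts k_pos by auto
  moreover have "{v\<in>V. next_gene k < v} = V" using V unfolding next_gene_def by auto
  ultimately have "card V \<le> k" by simp
  then have rank_le: "rank v \<le> k" for v
    unfolding rank_def using card_mono[OF fin, of "{w\<in>V. v \<le> w}"] by auto
  have rank_pos: "1 \<le> rank v" if "v \<in> V" for v
    unfolding rank_def using fin that by (auto simp: Suc_le_eq card_gt_0_iff)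
  have rank_less: "rank w < rank v" if "v \<in> V" "w \<in> V" "v < w" for v w
  proof -
    have "v \<in> {x\<in>V. v \<le> x}" "v \<notin> {x\<in>V. w \<le> x}" "{x\<in>V. w \<le> x} \<subseteq> {x\<in>V. v \<le> x}"
      using that by auto
    then have "{x\<in>V. w \<le> x} \<subset> {x\<in>V. v \<le> x}" by blast
    then show ?thesis unfolding rank_def using fin by (intro psubset_card_mono) auto
  qed
  have "inj_on (g \<circ> rank) V"
  proof (rule inj_onI)
    fix v w assume vw: "v \<in> V" "w \<in> V" "(g \<circ> rank) v = (g \<circ> rank) w"
    then have "rank v = rank w" using inj_onD[OF inj_on_g] rank_pos rank_le by auto
    then show "v = w" using rank_less vw by (metis less_irrefl linorder_neqE_nat)
  qed
  moreover have "(g \<circ> rank) ` V \<subseteq> genes" using rank_pos rank_le by auto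
  moreover have "v \<le> g (rank v)" if v: "v \<in> V" for v
  proof (rule ccontr)
    assume less: "\<not> v \<le> g (rank v)"
    have "rank v \<noteq> 1" using less top v by auto
    then have i: "rank v - 1 \<in> {1..k}" "rank v - 1 \<noteq> k" "rank v - 1 + 1 = rank v"
      using rank_pos[OF v] rank_le[of v] by auto
    then have "{w\<in>V. v \<le> w} \<subseteq> {w\<in>V. next_gene (rank v - 1) < w}"
      using less unfolding next_gene_def by auto
    then have "rank v \<le> card {w\<in>V. next_gene (rank v - 1) < w}"
      unfolding rank_def using fin by (intro card_mono) auto
    then show False using counts i by fastforce
  qed
  ultimately show ?thesis unfolding set_le_def comp_def by blast
qed

definition admissible :: "nat set \<Rightarrow> bool" where
  "admissible V \<longleftrightarrow> V \<subseteq> {1..n-1} \<and> (\<forall>v\<in>V. v \<le> g 1) \<and>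
     (\<forall>i\<in>{1..k}. card {v\<in>V. next_gene i < v} \<le> i)"

lemma subgee_iff_admissible: "subgee l n V \<longleftrightarrow> admissible V"
  unfolding subgee_iff_set_le_genes admissible_def
  using counts_if_set_le_genes le_g1_if_set_le_genes set_le_genes_if_counts by blast

end

section \<open>Counting admissible supersets gap by gap\<close>

lemma card_exchange_class:
  fixes A :: "'a set set"
  assumes fin: "finite S" and V0: "V0 \<in> A"
    and closed: "\<And>V Y. V \<in> A \<Longrightarrow> Y \<subseteq> S \<Longrightarrow> card Y = card (V \<inter> S) \<Longrightarrow> (V - S) \<union> Y \<in> A"
  shows "card {V\<in>A. V - S = V0 - S \<and> card (V \<inter> S) = card (V0 \<inter> S)} = card S choose card (V0 \<inter> S)"
proof -
  define W where "W = V0 - S"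
  define y where "y = card (V0 \<inter> S)"
  have "{V\<in>A. V - S = W \<and> card (V \<inter> S) = y} = (\<lambda>Y. W \<union> Y) ` {Y. Y \<subseteq> S \<and> card Y = y}"
  proof (intro equalityI subsetI)
    fix V assume "V \<in> {V\<in>A. V - S = W \<and> card (V \<inter> S) = y}"
    then have V: "V - S = W" "card (V \<inter> S) = y" by auto
    then have "V = W \<union> (V \<inter> S)" by auto
    then show "V \<in> (\<lambda>Y. W \<union> Y) ` {Y. Y \<subseteq> S \<and> card Y = y}" using V by blast
  next
    fix V assume "V \<in> (\<lambda>Y. W \<union> Y) ` {Y. Y \<subseteq> S \<and> card Y = y}"
    then obtain Y where Y: "Y \<subseteq> S" "card Y = y" "V = W \<union> Y" by auto
    have "V \<in> A" using closed[OF V0 Y(1)] Y unfolding W_def y_def by simp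
    moreover have "V - S = W" "V \<inter> S = Y" using Y unfolding W_def by auto
    ultimately show "V \<in> {V\<in>A. V - S = W \<and> card (V \<inter> S) = y}" using Y by simp
  qed
  moreover have "inj_on (\<lambda>Y. W \<union> Y) {Y. Y \<subseteq> S \<and> card Y = y}"
  proof (rule inj_onI)
    fix Y1 Y2 assume "Y1 \<in> {Y. Y \<subseteq> S \<and> card Y = y}" "Y2 \<in> {Y. Y \<subseteq> S \<and> card Y = y}"
      "W \<union> Y1 = W \<union> Y2"
    moreover have "W \<inter> S = {}" unfolding W_def by auto
    ultimately show "Y1 = Y2" by blast
  qed
  ultimately have "card {V\<in>A. V - S = W \<and> card (V \<inter> S) = y} = card {Y. Y \<subseteq> S \<and> card Y = y}"
    by (simp add: card_image)
  also have "\<dots> = card S choose y" using n_subsets[OF fin] .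
  finally show ?thesis unfolding W_def y_def .
qed

text \<open>Modulo 2, each class \<open>{V \<in> A. V - S = W, |V \<inter> S| = y}\<close> of \<open>card_exchange_class\<close> may be
  replaced by its canonical member if \<open>|S| choose y\<close> is odd, and dropped otherwise.\<close>

lemma even_card_exchange_reduce:
  fixes A :: "'a set set" and S :: "'a set" and canon :: "nat \<Rightarrow> 'a set"
  assumes fin: "finite A" "finite S"
    and closed: "\<And>V Y. V \<in> A \<Longrightarrow> Y \<subseteq> S \<Longrightarrow> card Y = card (V \<inter> S) \<Longrightarrow> (V - S) \<union> Y \<in> A"
    and canon: "\<And>y. y \<le> card S \<Longrightarrow> canon y \<subseteq> S \<and> card (canon y) = y"
  shows "even (card A) \<longleftrightarrow>
    even (card {V\<in>A. V \<inter> S = canon (card (V \<inter> S)) \<and> odd (card S choose card (V \<inter> S))})"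
proof -
  define cls where "cls V = (V - S, card (V \<inter> S))" for V
  have card_class: "card {V\<in>A. cls V = z} = card S choose snd z" if z: "z \<in> cls ` A" for z
  proof -
    obtain V0 where V0: "V0 \<in> A" "z = cls V0" using z by blast
    have "{V\<in>A. cls V = z} = {V\<in>A. V - S = V0 - S \<and> card (V \<inter> S) = card (V0 \<inter> S)}"
      unfolding V0(2) cls_def by simp
    moreover have "snd z = card (V0 \<inter> S)" unfolding V0(2) cls_def by simp
    ultimately show ?thesis using card_exchange_class[OF fin(2) V0(1) closed] by (simp only:)
  qed
  have odd_classes: "{z. odd (card {V\<in>A. cls V = z})} = {z\<in>cls ` A. odd (card S choose snd z)}"
  proof -
    have "odd (card {V\<in>A. cls V = z}) \<longleftrightarrow> z \<in> cls ` A \<and> odd (card S choose snd z)" for z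
    proof (cases "z \<in> cls ` A")
      case False
      then have "{V\<in>A. cls V = z} = {}" by auto
      then show ?thesis using False by (simp only: card.empty) simp
    qed (simp add: card_class)
    then show ?thesis by blast
  qed
  define B where
    "B = {V\<in>A. V \<inter> S = canon (card (V \<inter> S)) \<and> odd (card S choose card (V \<inter> S))}"
  have "inj_on cls B"
  proof (rule inj_onI)
    fix V1 V2 assume V: "V1 \<in> B" "V2 \<in> B" "cls V1 = cls V2"
    have "V1 = (V1 - S) \<union> canon (card (V1 \<inter> S))" using V(1) unfolding B_def by blast
    also have "\<dots> = (V2 - S) \<union> canon (card (V2 \<inter> S))" using V(3) unfolding cls_def by simp
    also have "\<dots> = V2" using V(2) unfolding B_def by blast
    finally show "V1 = V2" .
  qed
  moreover have "cls ` B = {z\<in>cls ` A. odd (card S choose snd z)}"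
  proof
    show "cls ` B \<subseteq> {z\<in>cls ` A. odd (card S choose snd z)}"
      unfolding B_def cls_def by auto
    show "{z\<in>cls ` A. odd (card S choose snd z)} \<subseteq> cls ` B"
    proof
      fix z assume "z \<in> {z\<in>cls ` A. odd (card S choose snd z)}"
      then obtain V0 where V0: "V0 \<in> A" "z = cls V0" "odd (card S choose card (V0 \<inter> S))"
        unfolding cls_def by auto
      define y where "y = card (V0 \<inter> S)"
      have "y \<le> card S" unfolding y_def by (rule card_mono[OF fin(2)]) auto
      then have cy: "canon y \<subseteq> S" "card (canon y) = y" using canon by auto
      define V where "V = (V0 - S) \<union> canon y"
      have "V \<in> A" unfolding V_def using closed[OF V0(1) cy(1)] cy(2) y_def by simp
      moreover have VS: "V \<inter> S = canon y" "V - S = V0 - S" unfolding V_def using cy by auto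
      ultimately have "V \<in> B" unfolding B_def using cy V0(3) y_def by simp
      moreover have "cls V = z" using V0(2) VS cy unfolding cls_def y_def by simp
      ultimately show "z \<in> cls ` B" by blast
    qed
  qed
  ultimately have "card B = card {z\<in>cls ` A. odd (card S choose snd z)}"
    using card_image by metis
  then show ?thesis
    using even_card_odd_fibres[OF fin(1), of cls] odd_classes unfolding B_def by simp
qed

context single_gene
begin

definition gap :: "nat \<Rightarrow> nat set" where
  "gap p = {next_gene p<..<g p}"

definition gap_prefix :: "nat \<Rightarrow> nat \<Rightarrow> nat set" where
  "gap_prefix p y = {next_gene p<..next_gene p + y}"

lemma finite_gap: "finite (gap p)"
  unfolding gap_def by simp

lemma card_gap: "card (gap p) = g p - Suc (next_gene p)"
  unfolding gap_def by simp

lemma card_gap_prefix: "card (gap_prefix p y) = y"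
  unfolding gap_prefix_def by simp

lemma gap_prefix_subset:
  assumes "y \<le> card (gap p)"
  shows "gap_prefix p y \<subseteq> gap p"
proof -
  have "next_gene p + y < g p \<or> y = 0" using assms unfolding card_gap by linarith
  then show ?thesis unfolding gap_prefix_def gap_def by auto
qed

lemma gap_prefix_0: "gap_prefix p 0 = {}"
  unfolding gap_prefix_def by auto

lemma next_gene_antimono:
  assumes "p \<in> {1..k}" "i \<in> {1..k}" "p \<le> i"
  shows "next_gene i \<le> next_gene p"
  using g_antimono[of "p + 1" "i + 1"] assms unfolding next_gene_def by auto

lemma gaps_disjoint:
  assumes "p \<in> {1..k}" "q \<in> {1..k}" "p \<noteq> q"
  shows "gap p \<inter> gap q = {}"
proof -
  have *: "gap p \<inter> gap q = {}" if "p \<in> {1..k}" "q \<in> {1..k}" "p < q" for p q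
    using g_antimono[of "p + 1" q] that unfolding gap_def next_gene_def by auto
  show ?thesis using *[of p q] *[of q p] assms by (cases "p < q") auto
qed

lemma gap_Int_genes: "p \<in> {1..k} \<Longrightarrow> gap p \<inter> genes = {}"
  unfolding gap_def
  using next_gene_less_iff g_antimono by (fastforce simp: not_less)

lemma gap_bounds: "p \<in> {1..k} \<Longrightarrow> u \<in> gap p \<Longrightarrow> 1 \<le> u \<and> u \<le> g 1 \<and> u \<le> n - 1"
  unfolding gap_def using g_antimono[of 1 p] g_range k_pos by fastforce

lemma gap_above_next_gene:
  "p \<in> {1..k} \<Longrightarrow> i \<in> {1..k} \<Longrightarrow> p \<le> i \<Longrightarrow> u \<in> gap p \<Longrightarrow> next_gene i < u"
  using next_gene_antimono unfolding gap_def by fastforce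

lemma gap_below_next_gene:
  "p \<in> {1..k} \<Longrightarrow> i \<in> {1..k} \<Longrightarrow> i < p \<Longrightarrow> u \<in> gap p \<Longrightarrow> \<not> next_gene i < u"
  using g_antimono[of "i + 1" p] unfolding gap_def next_gene_def by auto

lemma in_gap_if_not_gene:
  assumes u: "1 \<le> u" "u \<le> g 1" "u \<notin> genes"
  shows "\<exists>p\<in>{1..k}. u \<in> gap p"
proof -
  define P where "P = {p\<in>{1..k}. u < g p}"
  have "g 1 \<in> genes" using k_pos by auto
  then have "1 \<in> P" unfolding P_def using u k_pos by (auto simp: order.order_iff_strict)
  then have fin: "finite P" "P \<noteq> {}" unfolding P_def by auto
  define p where "p = Max P"
  have p: "p \<in> P" "\<And>q. q \<in> P \<Longrightarrow> q \<le> p"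
    unfolding p_def using Max_in[OF fin] Max_ge[OF fin(1)] by auto
  show ?thesis
  proof (cases "p = k")
    case True
    then show ?thesis using p u unfolding P_def gap_def next_gene_def by auto
  next
    case False
    then have "p + 1 \<in> {1..k}" using p unfolding P_def by auto
    then have "\<not> u < g (p + 1)" "u \<noteq> g (p + 1)" using p(2) u unfolding P_def by fastforce+
    then show ?thesis using p False unfolding P_def gap_def next_gene_def by auto
  qed
qed

lemma admissible_subset_genes_gaps: "admissible V \<Longrightarrow> V \<subseteq> genes \<union> (\<Union>p\<in>{1..k}. gap p)"
proof
  fix v assume "admissible V" "v \<in> V"
  then have "1 \<le> v" "v \<le> g 1" unfolding admissible_def by auto
  then show "v \<in> genes \<union> (\<Union>p\<in>{1..k}. gap p)" using in_gap_if_not_gene[of v] by blast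
qed

lemma admissible_exchange_gap:
  assumes V: "admissible V" and q: "q \<in> {1..k}"
    and Y: "Y \<subseteq> gap q" "card Y = card (V \<inter> gap q)"
  shows "admissible ((V - gap q) \<union> Y)"
proof -
  let ?V' = "(V - gap q) \<union> Y"
  have V': "V \<subseteq> {1..n-1}" "\<forall>v\<in>V. v \<le> g 1" "\<forall>i\<in>{1..k}. card {v\<in>V. next_gene i < v} \<le> i"
    using V unfolding admissible_def by auto
  have fin: "finite V" "finite Y"
    using V'(1) Y(1) finite_gap by (auto intro: finite_subset)
  have "card {v\<in>?V'. next_gene i < v} \<le> i" if i: "i \<in> {1..k}" for i
  proof (cases "q \<le> i")
    case True
    have above: "\<forall>u\<in>gap q. next_gene i < u" using gap_above_next_gene[OF q i True] by blast
    have "{v\<in>?V'. next_gene i < v} = {v\<in>V - gap q. next_gene i < v} \<union> Y"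
      using Y above by auto
    then have "card {v\<in>?V'. next_gene i < v} = card {v\<in>V - gap q. next_gene i < v} + card Y"
      using fin Y(1) by (simp only:) (rule card_Un_disjoint, auto)
    also have "\<dots> = card ({v\<in>V - gap q. next_gene i < v} \<union> (V \<inter> gap q))"
      unfolding Y(2) using fin by (intro card_Un_disjoint[symmetric]) auto
    also have "{v\<in>V - gap q. next_gene i < v} \<union> (V \<inter> gap q) = {v\<in>V. next_gene i < v}"
      using above by auto
    finally show ?thesis using V' i by simp
  next
    case False
    then have "{v\<in>?V'. next_gene i < v} = {v\<in>V. next_gene i < v}"
      using gap_below_next_gene[OF q i] Y by auto
    then show ?thesis using V' i by simp
  qed
  moreover have "?V' \<subseteq> {1..n-1}" "\<forall>v\<in>?V'. v \<le> g 1"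
    using V' Y gap_bounds[OF q] by force+
  ultimately show ?thesis unfolding admissible_def by blast
qed

definition admissible_supersets :: "nat set \<Rightarrow> nat set set" where
  "admissible_supersets J = {V. admissible V \<and> g ` J \<subseteq> V}"

definition canonical_in_gap :: "nat \<Rightarrow> nat set \<Rightarrow> bool" where
  "canonical_in_gap p V \<longleftrightarrow>
     V \<inter> gap p = gap_prefix p (card (V \<inter> gap p)) \<and> odd (card (gap p) choose card (V \<inter> gap p))"

lemma finite_admissible_supersets: "finite (admissible_supersets J)"
  unfolding admissible_supersets_def admissible_def
  by (rule finite_subset[of _ "Pow {1..n-1}"]) auto

lemma even_card_admissible_supersets_iff_canonical:
  assumes J: "J \<subseteq> {1..k}" and P: "finite P" "P \<subseteq> {1..k}"
  shows "even (card (admissible_supersets J)) \<longleftrightarrow>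
    even (card {V\<in>admissible_supersets J. \<forall>p\<in>P. canonical_in_gap p V})"
  using P
proof (induction P rule: finite_induct)
  case (insert q P)
  have q: "q \<in> {1..k}" using insert.prems by auto
  let ?A = "{V\<in>admissible_supersets J. \<forall>p\<in>P. canonical_in_gap p V}"
  have closed: "(V - gap q) \<union> Y \<in> ?A"
    if V: "V \<in> ?A" and Y: "Y \<subseteq> gap q" "card Y = card (V \<inter> gap q)" for V Y
  proof -
    have "admissible ((V - gap q) \<union> Y)"
      using admissible_exchange_gap[OF _ q Y] V unfolding admissible_supersets_def by auto
    moreover have "g ` J \<subseteq> (V - gap q) \<union> Y"
      using V gap_Int_genes[OF q] J unfolding admissible_supersets_def by auto
    moreover have "((V - gap q) \<union> Y) \<inter> gap p = V \<inter> gap p" if "p \<in> P" for p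
    proof -
      have "p \<in> {1..k}" "p \<noteq> q" using that insert.hyps(2) insert.prems by auto
      then show ?thesis using gaps_disjoint[OF _ q] Y by auto
    qed
    ultimately show ?thesis
      using V unfolding admissible_supersets_def canonical_in_gap_def by auto
  qed
  have "even (card ?A) \<longleftrightarrow>
      even (card {V\<in>?A. V \<inter> gap q = gap_prefix q (card (V \<inter> gap q)) \<and>
                         odd (card (gap q) choose card (V \<inter> gap q))})"
    by (rule even_card_exchange_reduce[OF _ finite_gap closed])
      (use finite_admissible_supersets gap_prefix_subset card_gap_prefix in auto)
  also have "{V\<in>?A. V \<inter> gap q = gap_prefix q (card (V \<inter> gap q)) \<and>
                     odd (card (gap q) choose card (V \<inter> gap q))} =
      {V\<in>admissible_supersets J. \<forall>p\<in>insert q P. canonical_in_gap p V}"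
    unfolding canonical_in_gap_def by auto
  finally show ?case using insert by simp
qed simp

definition gap_binomials_even :: "nat \<Rightarrow> bool" where
  "gap_binomials_even p \<longleftrightarrow> (\<forall>y. 1 \<le> y \<and> y \<le> p \<longrightarrow> even (card (gap p) choose y))"

lemma finite_admissible: "admissible V \<Longrightarrow> finite V"
  unfolding admissible_def by (meson finite_atLeastAtMost finite_subset)

lemma admissible_subset: "admissible V \<Longrightarrow> U \<subseteq> V \<Longrightarrow> admissible U"
  using subgee_iff_admissible subgee_subset_closed by blast

lemma admissible_genes: "admissible genes"
  using subgee_iff_admissible subgee_iff_set_le_genes genes_subset set_le_refl by blast

lemma card_admissible_le:
  assumes "admissible V"
  shows "card V \<le> k"
proof -
  have "{v\<in>V. next_gene k < v} = V"
    using assms unfolding admissible_def next_gene_def by auto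
  moreover have "card {v\<in>V. next_gene k < v} \<le> k"
    using assms k_pos unfolding admissible_def by auto
  ultimately show ?thesis by simp
qed

lemma card_genes_above_plus_gap_le:
  assumes V: "admissible V" and J: "J \<subseteq> {1..k}" "g ` J \<subseteq> V" and p: "p \<in> {1..k}"
  shows "card {j\<in>J. j \<le> p} + card (V \<inter> gap p) \<le> p"
proof -
  have "card {j\<in>J. j \<le> p} = card (g ` {j\<in>J. j \<le> p})"
    by (rule card_image[symmetric]) (rule inj_on_subset[OF inj_on_g], use J in auto)
  also have "\<dots> + card (V \<inter> gap p) = card (g ` {j\<in>J. j \<le> p} \<union> (V \<inter> gap p))"
    using gap_Int_genes[OF p] J finite_admissible[OF V]
    by (intro card_Un_disjoint[symmetric]) (auto intro: finite_subset)
  also have "\<dots> \<le> card {v\<in>V. next_gene p < v}"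
    using J next_gene_less_iff[OF p] gap_above_next_gene[OF p p] finite_admissible[OF V]
    by (intro card_mono) auto
  also have "\<dots> \<le> p" using V p unfolding admissible_def by auto
  finally show ?thesis .
qed

lemma card_admissible_Int_gap_le: "admissible V \<Longrightarrow> p \<in> {1..k} \<Longrightarrow> card (V \<inter> gap p) \<le> p"
  using card_genes_above_plus_gap_le[of V "{}"] by simp

lemma subset_genes_canonical:
  assumes "V \<subseteq> genes" "g ` J \<subseteq> V"
  shows "V \<in> admissible_supersets J" "\<forall>p\<in>{1..k}. canonical_in_gap p V"
proof -
  show "V \<in> admissible_supersets J"
    using admissible_subset[OF admissible_genes assms(1)] assms(2)
    unfolding admissible_supersets_def by simp
  have "V \<inter> gap p = {}" if "p \<in> {1..k}" for p
    using gap_Int_genes[OF that] assms(1) by auto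
  then show "\<forall>p\<in>{1..k}. canonical_in_gap p V"
    unfolding canonical_in_gap_def by (simp add: gap_prefix_0)
qed

lemma card_sets_between_genes:
  assumes "J \<subseteq> {1..k}"
  shows "card {V. g ` J \<subseteq> V \<and> V \<subseteq> genes} = 2 ^ (k - card J)"
proof -
  have "card (genes - g ` J) = k - card J"
    using card_Diff_subset[of "g ` J" genes] card_image[OF inj_on_subset[OF inj_on_g assms]]
      card_genes assms finite_subset[OF assms] by auto
  then show ?thesis using card_sets_between[of genes "g ` J"] assms by auto
qed

lemma even_card_admissible_supersets:
  assumes good: "\<forall>p\<in>{1..k}. gap_binomials_even p" and J: "J \<subseteq> {1..k}" "card J < k"
  shows "even (card (admissible_supersets J))"
proof -
  have "{V\<in>admissible_supersets J. \<forall>p\<in>{1..k}. canonical_in_gap p V} =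
      {V. g ` J \<subseteq> V \<and> V \<subseteq> genes}"
  proof (intro equalityI subsetI)
    fix V assume "V \<in> {V\<in>admissible_supersets J. \<forall>p\<in>{1..k}. canonical_in_gap p V}"
    then have V: "admissible V" "g ` J \<subseteq> V" "\<forall>p\<in>{1..k}. canonical_in_gap p V"
      unfolding admissible_supersets_def by auto
    have "card (V \<inter> gap p) = 0" if p: "p \<in> {1..k}" for p
    proof (rule ccontr)
      assume "card (V \<inter> gap p) \<noteq> 0"
      then have "even (card (gap p) choose card (V \<inter> gap p))"
        using good p card_admissible_Int_gap_le[OF V(1) p] unfolding gap_binomials_even_def by auto
      then show False using V(3) p unfolding canonical_in_gap_def by auto
    qed
    then have "V \<inter> gap p = {}" if "p \<in> {1..k}" for p
      using that finite_admissible[OF V(1)] by simp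
    then show "V \<in> {V. g ` J \<subseteq> V \<and> V \<subseteq> genes}"
      using admissible_subset_genes_gaps[OF V(1)] V(2) by blast
  next
    fix V assume "V \<in> {V. g ` J \<subseteq> V \<and> V \<subseteq> genes}"
    then show "V \<in> {V\<in>admissible_supersets J. \<forall>p\<in>{1..k}. canonical_in_gap p V}"
      using subset_genes_canonical[of V J] by simp
  qed
  moreover have "even (card {V. g ` J \<subseteq> V \<and> V \<subseteq> genes})"
    using card_sets_between_genes[OF J(1)] J(2) by simp
  ultimately show ?thesis
    using even_card_admissible_supersets_iff_canonical[OF J(1) finite_atLeastAtMost order_refl]
    by simp
qed

text \<open>Deleting the genes \<open>g_(i-y+1), \<dots>, g_i\<close> frees \<open>y\<close> places above \<open>next_gene i\<close>;
  the witness spends them on the first \<open>y\<close> points of gap \<open>i\<close>.\<close>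

definition omit_block :: "nat \<Rightarrow> nat \<Rightarrow> nat set" where
  "omit_block i y = {1..k} - {i - y<..i}"

definition block_witness :: "nat \<Rightarrow> nat \<Rightarrow> nat set" where
  "block_witness i y = g ` omit_block i y \<union> gap_prefix i y"

lemma omit_block_subset: "omit_block i y \<subseteq> {1..k}"
  unfolding omit_block_def by auto

lemma genes_omit_block_subset: "g ` omit_block i y \<subseteq> genes"
  using omit_block_subset by (rule image_mono)

lemma card_omit_block:
  assumes "i \<in> {1..k}" "y \<le> i"
  shows "card (omit_block i y) = k - y"
proof -
  have "{i - y<..i} \<subseteq> {1..k}" using assms by auto
  then show ?thesis
    unfolding omit_block_def using card_Diff_subset[of "{i - y<..i}" "{1..k}"] assms by simp
qed

lemma card_omit_block_below:
  assumes "i \<in> {1..k}" "y \<le> i" "q \<in> {1..k}"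
  shows "card {j\<in>omit_block i y. j \<le> q} = q - (min q i - (i - y))"
proof -
  have "{j\<in>omit_block i y. j \<le> q} = {1..q} - {i - y<..min q i}"
    unfolding omit_block_def using assms by auto
  moreover have "{i - y<..min q i} \<subseteq> {1..q}" by auto
  ultimately show ?thesis using card_Diff_subset[of "{i - y<..min q i}" "{1..q}"] by simp
qed

lemma genes_above_next_gene:
  assumes "J \<subseteq> {1..k}" "q \<in> {1..k}"
  shows "{v\<in>g ` J. next_gene q < v} = g ` {j\<in>J. j \<le> q}"
proof (intro equalityI subsetI)
  fix v assume "v \<in> {v\<in>g ` J. next_gene q < v}"
  then obtain j where "j \<in> J" "v = g j" "next_gene q < g j" by blast
  then show "v \<in> g ` {j\<in>J. j \<le> q}" using next_gene_less_iff[OF assms(2)] assms(1) by blast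
next
  fix v assume "v \<in> g ` {j\<in>J. j \<le> q}"
  then obtain j where "j \<in> J" "v = g j" "j \<le> q" by blast
  then show "v \<in> {v\<in>g ` J. next_gene q < v}" using next_gene_less_iff[OF assms(2)] assms(1) by blast
qed

lemma card_gap_prefix_above_le:
  assumes i: "i \<in> {1..k}" and q: "q \<in> {1..k}" and y: "y \<le> card (gap i)"
  shows "card {v\<in>gap_prefix i y. next_gene q < v} \<le> (if i \<le> q then y else 0)"
proof (cases "i \<le> q")
  case True
  have "card {v\<in>gap_prefix i y. next_gene q < v} \<le> card (gap_prefix i y)"
    by (rule card_mono) (auto simp: gap_prefix_def)
  then show ?thesis using True card_gap_prefix by simp
next
  case False
  then have "{v\<in>gap_prefix i y. next_gene q < v} = {}"
    using gap_below_next_gene[OF i q] gap_prefix_subset[OF y] by auto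
  then have "card {v\<in>gap_prefix i y. next_gene q < v} = 0"
    by (simp only: card.empty)
  then show ?thesis by simp
qed

lemma block_witness_admissible:
  assumes i: "i \<in> {1..k}" and y: "y \<le> i" "y \<le> card (gap i)"
  shows "block_witness i y \<in> admissible_supersets (omit_block i y)"
proof -
  let ?J = "omit_block i y" and ?W = "block_witness i y"
  have range: "v \<in> {1..n-1} \<and> v \<le> g 1" if v: "v \<in> ?W" for v
  proof (cases "v \<in> gap_prefix i y")
    case True
    then show ?thesis using gap_prefix_subset[OF y(2)] gap_bounds[OF i] by auto
  next
    case False
    then obtain j where "j \<in> {1..k}" "v = g j"
      using v omit_block_subset unfolding block_witness_def by blast
    then show ?thesis using g_range[rule_format, of j] g_antimono[of 1 j] by auto
  qed
  have "card {v\<in>?W. next_gene q < v} \<le> q" if q: "q \<in> {1..k}" for q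
  proof -
    have "{v\<in>?W. next_gene q < v} =
        g ` {j\<in>?J. j \<le> q} \<union> {v\<in>gap_prefix i y. next_gene q < v}"
      using genes_above_next_gene[OF omit_block_subset q] unfolding block_witness_def by blast
    then have "card {v\<in>?W. next_gene q < v} \<le>
        card (g ` {j\<in>?J. j \<le> q}) + card {v\<in>gap_prefix i y. next_gene q < v}"
      by (simp add: card_Un_le)
    moreover have "card (g ` {j\<in>?J. j \<le> q}) \<le> card {j\<in>?J. j \<le> q}"
      by (rule card_image_le) (use finite_subset[OF omit_block_subset] in simp)
    ultimately show ?thesis
      using card_gap_prefix_above_le[OF i q y(2)] card_omit_block_below[OF i y(1) q] y(1)
      by (simp split: if_splits)
  qed
  moreover have "g ` ?J \<subseteq> ?W" unfolding block_witness_def by blast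
  ultimately show ?thesis using range unfolding admissible_supersets_def admissible_def by blast
qed

lemma block_witness_canonical:
  assumes i: "i \<in> {1..k}" and y: "y \<le> card (gap i)" "odd (card (gap i) choose y)"
    and p: "p \<in> {1..k}"
  shows "canonical_in_gap p (block_witness i y)"
proof -
  have prefix: "gap_prefix i y \<subseteq> gap i" "card (gap_prefix i y) = y"
    using gap_prefix_subset[OF y(1)] card_gap_prefix by auto
  have "g ` omit_block i y \<inter> gap p = {}"
    using gap_Int_genes[OF p] genes_omit_block_subset[of i y] by blast
  then have W: "block_witness i y \<inter> gap p = gap_prefix i y \<inter> gap p"
    unfolding block_witness_def by auto
  show ?thesis
  proof (cases "p = i")
    case True
    then have "block_witness i y \<inter> gap p = gap_prefix i y" using W prefix(1) by auto
    then show ?thesis using True prefix(2) y(2) unfolding canonical_in_gap_def by simp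
  next
    case False
    then have "block_witness i y \<inter> gap p = {}" using W prefix(1) gaps_disjoint[OF p i False] by auto
    then show ?thesis unfolding canonical_in_gap_def by (simp add: gap_prefix_0)
  qed
qed

text \<open>If \<open>y\<close> is the least size with an odd binomial in some gap and \<open>i\<close> the last gap where
  size \<open>y\<close> has an odd binomial, then the witness is the only canonical admissible superset of
  \<open>omit_block i y\<close> that is not made of genes.\<close>

context
  fixes i y :: nat
  assumes i: "i \<in> {1..k}" and y: "1 \<le> y" "y \<le> i"
    and least: "\<And>p z. p \<in> {1..k} \<Longrightarrow> 1 \<le> z \<Longrightarrow> z \<le> p \<Longrightarrow> z < y \<Longrightarrow>
      even (card (gap p) choose z)"
    and last: "\<And>p. p \<in> {1..k} \<Longrightarrow> i < p \<Longrightarrow> even (card (gap p) choose y)"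
begin

lemma canonical_superset_gap_part:
  assumes V: "V \<in> admissible_supersets (omit_block i y)" "\<forall>p\<in>{1..k}. canonical_in_gap p V"
    and p: "p \<in> {1..k}" and nonempty: "V \<inter> gap p \<noteq> {}"
  shows "p = i \<and> card (V \<inter> gap p) = y"
proof -
  have adm: "admissible V" and sup: "g ` omit_block i y \<subseteq> V"
    using V(1) unfolding admissible_supersets_def by auto
  have nz: "card (V \<inter> gap p) \<noteq> 0"
    using nonempty finite_admissible[OF adm] by simp
  have bound: "card (V \<inter> gap p) \<le> min p i - (i - y)"
    using card_genes_above_plus_gap_le[OF adm omit_block_subset sup p]
      card_omit_block_below[OF i y(2) p] by linarith
  have odd: "odd (card (gap p) choose card (V \<inter> gap p))"
    using V(2) p unfolding canonical_in_gap_def by blast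
  have "y \<le> card (V \<inter> gap p)"
  proof (rule ccontr)
    assume "\<not> y \<le> card (V \<inter> gap p)"
    then have "even (card (gap p) choose card (V \<inter> gap p))"
      using least[OF p] nz card_admissible_Int_gap_le[OF adm p] by simp
    then show False using odd by simp
  qed
  then have "i \<le> p" "card (V \<inter> gap p) = y"
    using bound y by (auto simp: min_def split: if_splits)
  moreover have "\<not> i < p"
    using last[OF p] odd \<open>card (V \<inter> gap p) = y\<close> by auto
  ultimately show ?thesis by simp
qed

lemma canonical_superset_omit_block:
  assumes V: "V \<in> admissible_supersets (omit_block i y)" "\<forall>p\<in>{1..k}. canonical_in_gap p V"
  shows "V \<subseteq> genes \<or> V = block_witness i y"
proof -
  have adm: "admissible V" and sup: "g ` omit_block i y \<subseteq> V"
    using V(1) unfolding admissible_supersets_def by auto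
  have fin: "finite V" using finite_admissible[OF adm] .
  have "V \<inter> gap p = {}" if "p \<in> {1..k}" "p \<noteq> i" for p
    using canonical_superset_gap_part[OF V that(1)] that(2) by blast
  then have split: "V = (V \<inter> genes) \<union> (V \<inter> gap i)"
    using admissible_subset_genes_gaps[OF adm] by blast
  show ?thesis
  proof (cases "V \<inter> gap i = {}")
    case True
    then show ?thesis using split by blast
  next
    case False
    then have card: "card (V \<inter> gap i) = y"
      using canonical_superset_gap_part[OF V i] by blast
    then have gap_part: "V \<inter> gap i = gap_prefix i y"
      using V(2) i unfolding canonical_in_gap_def by auto
    have "card V = card (V \<inter> genes) + y"
      using split card_Un_disjoint[of "V \<inter> genes" "V \<inter> gap i"] fin gap_Int_genes[OF i] card
      by auto
    then have "card (V \<inter> genes) \<le> card (g ` omit_block i y)"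
      using card_admissible_le[OF adm] card_omit_block[OF i y(2)]
        card_image[OF inj_on_subset[OF inj_on_g omit_block_subset]] by simp
    moreover have "g ` omit_block i y \<subseteq> V \<inter> genes"
      using sup genes_omit_block_subset[of i y] by auto
    ultimately have "V \<inter> genes = g ` omit_block i y"
      using card_seteq[of "V \<inter> genes"] fin by blast
    then have "V = block_witness i y"
      using split gap_part unfolding block_witness_def by simp
    then show ?thesis ..
  qed
qed

lemma odd_card_admissible_supersets_omit_block:
  assumes odd: "odd (card (gap i) choose y)"
  shows "odd (card (admissible_supersets (omit_block i y)))"
proof -
  let ?J = "omit_block i y" and ?W = "block_witness i y"
  have y_gap: "y \<le> card (gap i)"
    using odd binomial_eq_0[of "card (gap i)" y] by (cases "y \<le> card (gap i)") auto
  have "{V\<in>admissible_supersets ?J. \<forall>p\<in>{1..k}. canonical_in_gap p V} =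
      insert ?W {V. g ` ?J \<subseteq> V \<and> V \<subseteq> genes}"
  proof (intro equalityI subsetI)
    fix V assume "V \<in> {V\<in>admissible_supersets ?J. \<forall>p\<in>{1..k}. canonical_in_gap p V}"
    then show "V \<in> insert ?W {V. g ` ?J \<subseteq> V \<and> V \<subseteq> genes}"
      using canonical_superset_omit_block[of V] unfolding admissible_supersets_def by blast
  next
    fix V assume "V \<in> insert ?W {V. g ` ?J \<subseteq> V \<and> V \<subseteq> genes}"
    then show "V \<in> {V\<in>admissible_supersets ?J. \<forall>p\<in>{1..k}. canonical_in_gap p V}"
      using subset_genes_canonical[of V ?J] block_witness_admissible[OF i y(2) y_gap]
        block_witness_canonical[OF i y_gap odd] by blast
  qed
  moreover have "?W \<notin> {V. g ` ?J \<subseteq> V \<and> V \<subseteq> genes}"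
  proof
    assume "?W \<in> {V. g ` ?J \<subseteq> V \<and> V \<subseteq> genes}"
    then have "gap_prefix i y \<subseteq> genes \<inter> gap i"
      using gap_prefix_subset[OF y_gap] unfolding block_witness_def by auto
    then have "gap_prefix i y = {}"
      using gap_Int_genes[OF i] by blast
    then show False
      using card_gap_prefix[of i y] y(1) by simp
  qed
  moreover have "card {V. g ` ?J \<subseteq> V \<and> V \<subseteq> genes} = 2 ^ y"
    using card_sets_between_genes[OF omit_block_subset] card_omit_block[OF i y(2)] y i by simp
  ultimately have "odd (card {V\<in>admissible_supersets ?J. \<forall>p\<in>{1..k}. canonical_in_gap p V})"
    using y(1) by simp
  then show ?thesis
    using even_card_admissible_supersets_iff_canonical[OF omit_block_subset, of "{1..k}"] by simp
qed

end

lemma odd_card_admissible_supersets: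
  assumes "\<not> (\<forall>p\<in>{1..k}. gap_binomials_even p)"
  shows "\<exists>J. J \<subseteq> {1..k} \<and> card J < k \<and> odd (card (admissible_supersets J))"
proof -
  define Y where "Y = {y. \<exists>p\<in>{1..k}. 1 \<le> y \<and> y \<le> p \<and> odd (card (gap p) choose y)}"
  define y where "y = (LEAST y. y \<in> Y)"
  have "y \<in> Y" unfolding y_def using assms unfolding Y_def gap_binomials_even_def
    by (metis (mono_tags, lifting) LeastI mem_Collect_eq)
  have least: "even (card (gap p) choose z)" if "p \<in> {1..k}" "1 \<le> z" "z \<le> p" "z < y" for p z
    using that not_less_Least[of z "\<lambda>y. y \<in> Y"] unfolding y_def Y_def by blast
  define Ps where "Ps = {p\<in>{1..k}. y \<le> p \<and> odd (card (gap p) choose y)}"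
  have Ps: "finite Ps" "Ps \<noteq> {}" using \<open>y \<in> Y\<close> unfolding Ps_def Y_def by auto
  define i where "i = Max Ps"
  have i: "i \<in> {1..k}" "y \<le> i" "odd (card (gap i) choose y)"
    using Max_in[OF Ps] unfolding i_def Ps_def by auto
  have last: "even (card (gap p) choose y)" if "p \<in> {1..k}" "i < p" for p
    using Max_ge[OF Ps(1), of p] that i(2) unfolding i_def Ps_def by fastforce
  have "1 \<le> y" using \<open>y \<in> Y\<close> unfolding Y_def by auto
  then have "odd (card (admissible_supersets (omit_block i y)))"
    using odd_card_admissible_supersets_omit_block[OF i(1) _ i(2) least last i(3)] by blast
  moreover have "card (omit_block i y) < k"
    using card_omit_block[OF i(1,2)] \<open>1 \<le> y\<close> i by simp
  ultimately show ?thesis using omit_block_subset by blast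
qed

lemma even_card_admissible_supersets_iff:
  "(\<forall>J. J \<subseteq> {1..k} \<and> card J < k \<longrightarrow> even (card (admissible_supersets J))) \<longleftrightarrow>
    (\<forall>p\<in>{1..k}. gap_binomials_even p)"
  using even_card_admissible_supersets odd_card_admissible_supersets by blast

end

section \<open>Binomial coefficients modulo 2\<close>

text \<open>In Vandermonde's convolution for \<open>(2a choose 2j)\<close> the terms \<open>t\<close> and \<open>2j - t\<close> cancel
  in pairs, leaving \<open>(a choose j)\<^sup>2\<close>.\<close>

lemma even_choose_double_iff: "even ((2 * a) choose (2 * j)) \<longleftrightarrow> even (a choose j)"
proof -
  define f where "f t = (a choose t) * (a choose (2 * j - t))" for t
  have split: "{..2 * j} = {..<j} \<union> {j} \<union> {j<..2 * j}" by auto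
  have "(2 * a) choose (2 * j) = (\<Sum>t\<le>2 * j. f t)"
    unfolding f_def using vandermonde[of a a "2 * j"] by (simp add: mult_2)
  also have "\<dots> = (\<Sum>t<j. f t) + f j + (\<Sum>t\<in>{j<..2 * j}. f t)"
    unfolding split by (subst sum.union_disjoint, auto)+
  also have "(\<Sum>t\<in>{j<..2 * j}. f t) = (\<Sum>t<j. f t)"
  proof -
    have "inj_on (\<lambda>t. 2 * j - t) {..<j}" by (rule inj_onI) auto
    moreover have "(\<lambda>t. 2 * j - t) ` {..<j} = {j<..2 * j}"
    proof (intro equalityI subsetI)
      fix x assume "x \<in> {j<..2 * j}"
      then have "x = 2 * j - (2 * j - x)" "2 * j - x \<in> {..<j}" by auto
      then show "x \<in> (\<lambda>t. 2 * j - t) ` {..<j}" by blast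
    qed auto
    ultimately have "(\<Sum>t\<in>{j<..2 * j}. f t) = (\<Sum>t<j. f (2 * j - t))"
      using sum.reindex[of "\<lambda>t. 2 * j - t" "{..<j}" f] by simp
    also have "\<dots> = (\<Sum>t<j. f t)"
      by (rule sum.cong) (auto simp: f_def)
    finally show ?thesis .
  qed
  finally have "(2 * a) choose (2 * j) = 2 * (\<Sum>t<j. f t) + (a choose j) * (a choose j)"
    unfolding f_def by (simp add: mult_2)
  then show ?thesis by simp
qed

lemma odd_choose_power_two_mult: "odd u \<Longrightarrow> odd ((2 ^ b * u) choose 2 ^ b)"
proof (induction b)
  case (Suc b)
  have "(2 ^ Suc b * u) choose 2 ^ Suc b = (2 * (2 ^ b * u)) choose (2 * 2 ^ b)"
    by (simp add: mult.assoc)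
  then show ?case using even_choose_double_iff[of "2 ^ b * u" "2 ^ b"] Suc by simp
qed simp

lemma power_two_odd_decomp: "0 < (c::nat) \<Longrightarrow> \<exists>b u. c = 2 ^ b * u \<and> odd u"
proof (induction c rule: less_induct)
  case (less c)
  show ?case
  proof (cases "odd c")
    case False
    then obtain c' where c': "c = 2 * c'" by blast
    then have "0 < c'" "c' < c" using less.prems by auto
    then obtain b u where "c' = 2 ^ b * u" "odd u" using less.IH by blast
    then show ?thesis using c' by (intro exI[of _ "Suc b"] exI[of _ u]) simp
  qed (intro exI[of _ 0] exI[of _ c], simp)
qed

lemma even_choose_if_power_two_dvd:
  assumes dvd: "2 ^ L dvd (c::nat)" and y: "1 \<le> y" "y < 2 ^ L"
  shows "even (c choose y)"
proof (rule ccontr)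
  assume odd: "odd (c choose y)"
  have "y * (c choose y) = c * ((c - 1) choose (y - 1))"
    using times_binomial_minus1_eq[of y c] y by simp
  then have "(2::nat) ^ L dvd y * (c choose y)" using dvd by (metis dvd_mult2)
  moreover have "coprime ((2::nat) ^ L) (c choose y)" using odd by simp
  ultimately have "(2::nat) ^ L dvd y" using coprime_dvd_mult_left_iff by blast
  then show False using y by (auto dest: dvd_imp_le)
qed

text \<open>For the converse, \<open>c choose 2^b\<close> is odd when \<open>2^b\<close> is the exact power of 2 dividing \<open>c\<close>.\<close>

lemma even_choose_all_iff_power_two_dvd:
  assumes L: "2 ^ (L - 1) \<le> (p::nat)" "p < 2 ^ L"
  shows "(\<forall>y. 1 \<le> y \<and> y \<le> p \<longrightarrow> even (c choose y)) \<longleftrightarrow> 2 ^ L dvd (c::nat)"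
proof
  assume all: "\<forall>y. 1 \<le> y \<and> y \<le> p \<longrightarrow> even (c choose y)"
  show "2 ^ L dvd c"
  proof (rule ccontr)
    assume not_dvd: "\<not> 2 ^ L dvd c"
    then have "0 < c" by (metis dvd_0_right gr0I)
    then obtain b u where bu: "c = 2 ^ b * u" "odd u" using power_two_odd_decomp by blast
    have "b < L"
      using not_dvd le_imp_power_dvd[of L b "2::nat"] unfolding bu(1) by (metis dvd_mult2 not_less)
    then have "(2::nat) ^ b \<le> 2 ^ (L - 1)"
      by (intro power_increasing) auto
    then have "(2::nat) ^ b \<le> p" using L(1) by linarith
    then have "even (c choose 2 ^ b)" using all by simp
    then show False using odd_choose_power_two_mult[OF bu(2)] bu(1) by simp
  qed
qed (use even_choose_if_power_two_dvd L in auto)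

lemma lg_double_bounds:
  assumes "1 \<le> p"
  shows "2 ^ (lg (2 * p) - 1) \<le> p" "p < 2 ^ lg (2 * p)"
proof -
  obtain L where L: "2 ^ L \<le> 2 * p" "2 * p < 2 ^ (L + 1)"
    using ex_power_ivl1[of 2 "2 * p"] assms by auto
  have "\<lfloor>log 2 (real (2 * p))\<rfloor> = int L"
    using floor_log_nat_eq_if[of 2 L "2 * p"] L by simp
  then have lg: "lg (2 * p) = L" unfolding lg_def by simp
  have "L \<noteq> 0" using L(2) assms by (cases L) auto
  then have "(2::nat) ^ L = 2 * 2 ^ (L - 1)" by (cases L) auto
  then show "2 ^ (lg (2 * p) - 1) \<le> p" "p < 2 ^ lg (2 * p)" using L lg by auto
qed

context single_gene
begin

lemma HK_monomial_zero_genes_iff: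
  assumes "J \<subseteq> {1..k}"
  shows "HK_monomial_zero l n m (g ` J) \<longleftrightarrow> even (card (admissible_supersets J))"
proof -
  have "admissible (g ` J)"
    using admissible_subset[OF admissible_genes image_mono[OF assms]] .
  then have sg: "subgee l n (g ` J)"
    using subgee_iff_admissible by blast
  have "{g ` J} \<in> relations \<longleftrightarrow> even (card {V. subgee l n V \<and> g ` J \<subseteq> V})"
    using singleton_relation_iff subgee_subset[OF sg] card_subgee_le[OF sg] by blast
  also have "{V. subgee l n V \<and> g ` J \<subseteq> V} = admissible_supersets J"
    unfolding admissible_supersets_def subgee_iff_admissible ..
  finally show ?thesis unfolding HK_monomial_zero_def .
qed

lemma gap_binomials_even_iff:
  assumes "p \<in> {1..k}"
  shows "gap_binomials_even p \<longleftrightarrow> (g p - next_gene p) mod 2 ^ lg (2 * p) = 1 mod 2 ^ lg (2 * p)"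
proof -
  have gap: "g p - next_gene p = card (gap p) + 1"
    using next_gene_less[OF assms] card_gap by simp
  have even: "gap_binomials_even p \<longleftrightarrow> 2 ^ lg (2 * p) dvd card (gap p)"
    unfolding gap_binomials_even_def
    using even_choose_all_iff_power_two_dvd lg_double_bounds assms by simp
  have "(c + 1) mod M = 1 mod M \<longleftrightarrow> M dvd c" for c M :: nat
    by (metis add_diff_cancel_right' le_add2 mod_eq_dvd_iff_nat)
  then show ?thesis unfolding gap even by (rule sym)
qed

end

theorem lemma4p8:
  fixes l :: "nat \<Rightarrow> real" and n m k :: nat and g :: "nat \<Rightarrow> nat"
  assumes "generic_length_vector l n"
    and "n = m + 3" and "n \<ge> 4"
    and "genetic_code l n = {insert n (g ` {1..k})}"
    and "\<forall>i\<in>{1..k}. 1 \<le> g i \<and> g i < n"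
    and "\<forall>i. 1 \<le> i \<and> i < k \<longrightarrow> g (i + 1) < g i"
  shows "(\<forall>J. J \<subseteq> {1..k} \<and> card J < k \<longrightarrow> HK_monomial_zero l n m (g ` J))
     \<longleftrightarrow> (\<forall>i\<in>{1..k}.
            (g i - (if i = k then 0 else g (i + 1))) mod 2 ^ lg (2 * i) = 1 mod 2 ^ lg (2 * i))"
proof (cases "k = 0")
  case False
  interpret single_gene l n m g k
    using assms False by unfold_locales auto
  have "(\<forall>J. J \<subseteq> {1..k} \<and> card J < k \<longrightarrow> HK_monomial_zero l n m (g ` J)) \<longleftrightarrow>
      (\<forall>J. J \<subseteq> {1..k} \<and> card J < k \<longrightarrow> even (card (admissible_supersets J)))"
    using HK_monomial_zero_genes_iff by blast
  also have "\<dots> \<longleftrightarrow> (\<forall>p\<in>{1..k}. gap_binomials_even p)"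
    by (rule even_card_admissible_supersets_iff)
  also have "\<dots> \<longleftrightarrow> (\<forall>i\<in>{1..k}.
      (g i - (if i = k then 0 else g (i + 1))) mod 2 ^ lg (2 * i) = 1 mod 2 ^ lg (2 * i))"
    using gap_binomials_even_iff unfolding next_gene_def by simp
  finally show ?thesis .
qed simp

end
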